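(* Let $p$ be a prime, $q$ a power of $p$, and $F$ a field of characteristic $p$ containing $\mathbb{F}_q$. Let $L\in F[x]$ be a monic $q$-polynomial of $q$-degree $n\ge1$ such that $L(x)/x$ is irreducible over $F$ and the coefficient of $x$ in $L$ is $(-1)^n$. Then the Galois group $G$ of $L$ over $F$ is isomorphic to a subgroup of $SL(n,q)$ that acts transitively on the nonzero vectors of $\mathbb{F}_q^n$.
   Context: A $q$-polynomial over $F$ is a polynomial $\sum_{i=0}^n a_i x^{q^i}\in F[x]$; with $a_n\ne0$ its $q$-degree is $n$. The Galois group of $L$ over $F$ is the Galois group of a splitting field of $L$ over $F$; it acts $\mathbb{F}_q$-linearly on the $n$-dimensional $\mathbb{F}_q$-space of roots of $L$. *)

theory Defs
  imports "HOL-Computational_Algebra.Polynomial" "Jordan_Normal_Form.Determinant"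
begin

definition q_polynomial :: "nat \<Rightarrow> 'a::comm_ring_1 poly \<Rightarrow> bool" where
  "q_polynomial q L \<longleftrightarrow> (\<forall>i. coeff L i \<noteq> 0 \<longrightarrow> (\<exists>k. i = q ^ k))"

definition is_subfield :: "'k::field set \<Rightarrow> bool" where
  "is_subfield S \<longleftrightarrow> 0 \<in> S \<and> 1 \<in> S \<and>
     (\<forall>x\<in>S. \<forall>y\<in>S. x + y \<in> S \<and> x * y \<in> S) \<and>
     (\<forall>x\<in>S. - x \<in> S) \<and> (\<forall>x\<in>S. x \<noteq> 0 \<longrightarrow> inverse x \<in> S)"

definition splits :: "'k::field poly \<Rightarrow> bool" where
  "splits P \<longleftrightarrow> (\<exists>c xs. P = smult c (\<Prod>a\<leftarrow>xs. [:- a, 1:]))"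

definition ring_hom_fun :: "('a::ring_1 \<Rightarrow> 'b::ring_1) \<Rightarrow> bool" where
  "ring_hom_fun f \<longleftrightarrow> f 1 = 1 \<and> (\<forall>x y. f (x + y) = f x + f y) \<and> (\<forall>x y. f (x * y) = f x * f y)"

definition splitting_field :: "('f::field \<Rightarrow> 'k::field) \<Rightarrow> 'f poly \<Rightarrow> bool" where
  "splitting_field \<phi> P \<longleftrightarrow> ring_hom_fun \<phi> \<and> splits (map_poly \<phi> P) \<and>
     (\<forall>S. is_subfield S \<and> range \<phi> \<subseteq> S \<and> {a. poly (map_poly \<phi> P) a = 0} \<subseteq> S \<longrightarrow> S = UNIV)"

text \<open>The Galois group Aut(K/F) of the extension given by phi (group operation: composition).\<close>
definition galois_group :: "('f::field \<Rightarrow> 'k::field) \<Rightarrow> ('k \<Rightarrow> 'k) set" where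
  "galois_group \<phi> = {\<sigma>. bij \<sigma> \<and> ring_hom_fun \<sigma> \<and> (\<forall>c. \<sigma> (\<phi> c) = \<phi> c)}"

text \<open>The prime-power subfield F_q inside F: the roots of x^q - x.\<close>
definition Fq_set :: "nat \<Rightarrow> 'f::field set" where
  "Fq_set q = {x. x ^ q = x}"

text \<open>SL(n,q), as n x n matrices with entries in F_q (computed inside F) of determinant 1.\<close>
definition SL_mats :: "nat \<Rightarrow> nat \<Rightarrow> 'f::field mat set" where
  "SL_mats n q = {A \<in> carrier_mat n n. (\<forall>i<n. \<forall>j<n. A $$ (i, j) \<in> Fq_set q) \<and> det A = 1}"

definition nonzero_Fq_vecs :: "nat \<Rightarrow> nat \<Rightarrow> 'f::field vec set" where
  "nonzero_Fq_vecs n q = {v \<in> carrier_vec n. (\<forall>i<n. v $ i \<in> Fq_set q) \<and> v \<noteq> 0\<^sub>v n}"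

end

theory Submission
  imports Defs "Jordan_Normal_Form.Char_Poly"
begin

text \<open>Since \<open>L\<close> is a \<open>q\<close>-polynomial, the map \<open>x \<mapsto> L(x)\<close> is \<open>F\<^sub>q\<close>-linear, so the roots of \<open>L\<close>
  in a splitting field form an \<open>F\<^sub>q\<close>-vector space \<open>V\<close>; as \<open>L' = (-1)\<^sup>n\<close> is a nonzero constant,
  \<open>L\<close> is separable and \<open>V\<close> has \<open>q\<^sup>n\<close> elements, i.e. dimension \<open>n\<close>. The Galois group fixes
  \<open>F\<^sub>q\<close> and permutes \<open>V\<close>, so it acts by matrices over \<open>F\<^sub>q\<close> with respect to a basis
  \<open>b\<^sub>0, \<dots>, b\<^sub>n\<^sub>-\<^sub>1\<close>, faithfully because \<open>V\<close> generates the splitting field.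

  The Moore matrix \<open>M = (b\<^sub>i ^ q\<^sup>j)\<close> is invertible, and Frobenius maps it to \<open>M S\<close> with \<open>S\<close>
  the companion matrix of \<open>L\<close>, whose determinant is \<open>(-1)\<^sup>n\<close> times the coefficient of \<open>x\<close>, i.e. \<open>1\<close>.
  Hence \<open>det M \<in> F\<^sub>q\<close> is fixed by every \<open>\<sigma>\<close>, while \<open>\<sigma>(M) = A\<^sub>\<sigma>\<^sup>T M\<close>; thus \<open>det A\<^sub>\<sigma> = 1\<close>.
  Transitivity on \<open>V - {0}\<close> is transitivity of the Galois group on the roots of the irreducible
  polynomial \<open>L/x\<close>, obtained by extending field embeddings one adjoined root at a time.\<close>

section \<open>Polynomials over a subfield and adjunction of a root\<close>

definition poly_over :: "'k::field set \<Rightarrow> 'k poly \<Rightarrow> bool" where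
  "poly_over E g \<longleftrightarrow> (\<forall>i. coeff g i \<in> E)"

definition min_poly_over :: "'k::field set \<Rightarrow> 'k \<Rightarrow> 'k poly \<Rightarrow> bool" where
  "min_poly_over E r m \<longleftrightarrow> poly_over E m \<and> lead_coeff m = 1 \<and> poly m r = 0 \<and>
     (\<forall>h. poly_over E h \<and> h \<noteq> 0 \<and> poly h r = 0 \<longrightarrow> degree m \<le> degree h)"

context
  fixes E :: "'k::field set"
  assumes E: "is_subfield E"
begin

lemma subfield_0 [simp]: "0 \<in> E" and subfield_1 [simp]: "1 \<in> E"
  using E unfolding is_subfield_def by auto

lemma subfield_add [intro]: "x \<in> E \<Longrightarrow> y \<in> E \<Longrightarrow> x + y \<in> E"
  and subfield_mult [intro]: "x \<in> E \<Longrightarrow> y \<in> E \<Longrightarrow> x * y \<in> E"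
  and subfield_uminus [intro]: "x \<in> E \<Longrightarrow> - x \<in> E"
  using E unfolding is_subfield_def by auto

lemma subfield_inverse [intro]: "x \<in> E \<Longrightarrow> inverse x \<in> E"
  using E unfolding is_subfield_def by (cases "x = 0") auto

lemma subfield_diff [intro]: "x \<in> E \<Longrightarrow> y \<in> E \<Longrightarrow> x - y \<in> E"
  using subfield_add[of x "- y"] by auto

lemma subfield_divide [intro]: "x \<in> E \<Longrightarrow> y \<in> E \<Longrightarrow> x / y \<in> E"
  using subfield_mult[of x "inverse y"] by (auto simp: divide_inverse)

lemma subfield_sum [intro]: "(\<And>i. i \<in> A \<Longrightarrow> f i \<in> E) \<Longrightarrow> sum f A \<in> E"
  by (induction A rule: infinite_finite_induct) auto

lemma poly_over_0 [simp]: "poly_over E 0" and poly_over_1 [simp]: "poly_over E 1"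
  and poly_over_X [simp]: "poly_over E [:0, 1:]"
  unfolding poly_over_def by (auto simp: coeff_pCons split: nat.splits)

lemma poly_over_const [intro]: "c \<in> E \<Longrightarrow> poly_over E [:c:]"
  and poly_over_monom [intro]: "c \<in> E \<Longrightarrow> poly_over E (monom c k)"
  unfolding poly_over_def by (auto simp: coeff_pCons split: nat.splits)

lemma poly_over_add [intro]: "poly_over E g \<Longrightarrow> poly_over E h \<Longrightarrow> poly_over E (g + h)"
  and poly_over_diff [intro]: "poly_over E g \<Longrightarrow> poly_over E h \<Longrightarrow> poly_over E (g - h)"
  and poly_over_uminus [intro]: "poly_over E g \<Longrightarrow> poly_over E (- g)"
  and poly_over_smult [intro]: "c \<in> E \<Longrightarrow> poly_over E g \<Longrightarrow> poly_over E (smult c g)"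
  unfolding poly_over_def by auto

lemma poly_over_mult [intro]: "poly_over E g \<Longrightarrow> poly_over E h \<Longrightarrow> poly_over E (g * h)"
  unfolding poly_over_def coeff_mult by auto

lemma lead_coeff_poly_over: "poly_over E g \<Longrightarrow> lead_coeff g \<in> E"
  unfolding poly_over_def by auto

lemma poly_over_divmod:
  assumes "poly_over E a" "poly_over E b" "b \<noteq> 0"
  shows "\<exists>Q Rm. poly_over E Q \<and> poly_over E Rm \<and> a = Q * b + Rm \<and> (Rm = 0 \<or> degree Rm < degree b)"
  using assms(1)
proof (induction "degree a" arbitrary: a rule: less_induct)
  case less
  show ?case
  proof (cases "a = 0 \<or> degree a < degree b")
    case True
    then show ?thesis using less.prems by (intro exI[of _ 0] exI[of _ a]) auto
  next
    case False
    hence a0: "a \<noteq> 0" and dab: "degree b \<le> degree a" by auto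
    define c where "c = lead_coeff a / lead_coeff b"
    define u where "u = monom c (degree a - degree b)"
    have c0: "c \<noteq> 0" using a0 assms(3) by (simp add: c_def)
    have u: "poly_over E u"
      unfolding u_def c_def
      by (intro poly_over_monom subfield_divide lead_coeff_poly_over less.prems assms(2))
    have deg_u: "degree u = degree a - degree b" unfolding u_def using c0 by (rule degree_monom_eq)
    have deg: "degree (u * b) = degree a"
      using c0 assms(3) dab deg_u by (auto simp: u_def degree_mult_eq)
    have lc: "lead_coeff (u * b) = lead_coeff a"
      using deg_u assms(3) by (simp add: lead_coeff_mult u_def c_def)
    show ?thesis
    proof (cases "a - u * b = 0")
      case True
      then show ?thesis using u by (intro exI[of _ u] exI[of _ 0]) auto
    next
      case False
      hence "degree (a - u * b) < degree a"
        using deg lc by (metis coeff_diff degree_diff_less diff_self leading_coeff_0_iff nat_neq_iff)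
      from less.hyps[OF this] obtain Q Rm where QR: "poly_over E Q" "poly_over E Rm"
        "a - u * b = Q * b + Rm" "Rm = 0 \<or> degree Rm < degree b"
        using less.prems assms(2) u by blast
      have "a = (Q + u) * b + Rm" using QR(3) by (simp add: algebra_simps)
      then show ?thesis using QR u by (intro exI[of _ "Q + u"] exI[of _ Rm]) auto
    qed
  qed
qed

lemma min_poly_over_exists:
  assumes "poly_over E g" "g \<noteq> 0" "poly g r = 0"
  shows "\<exists>m. min_poly_over E r m"
proof -
  let ?S = "\<lambda>h. poly_over E h \<and> h \<noteq> 0 \<and> poly h r = 0"
  obtain h where h: "?S h" and h_min: "\<And>h'. ?S h' \<Longrightarrow> degree h \<le> degree h'"
    using ex_has_least_nat[of ?S g degree] assms by blast
  define m where "m = smult (inverse (lead_coeff h)) h"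
  have "min_poly_over E r m"
    using h h_min lead_coeff_poly_over[of h] unfolding min_poly_over_def m_def by auto
  then show ?thesis ..
qed

lemma min_poly_over_dvd:
  assumes m: "min_poly_over E r m" and g: "poly_over E g" "poly g r = 0"
  shows "\<exists>Q. poly_over E Q \<and> g = Q * m"
proof -
  have "m \<noteq> 0" using m unfolding min_poly_over_def by auto
  then obtain Q Rm where QR: "poly_over E Q" "poly_over E Rm" "g = Q * m + Rm"
    "Rm = 0 \<or> degree Rm < degree m"
    using poly_over_divmod[OF g(1)] m unfolding min_poly_over_def by blast
  have "poly Rm r = 0" using QR(3) g(2) m unfolding min_poly_over_def by simp
  hence "Rm = 0" using m QR(2,4) unfolding min_poly_over_def by fastforce
  thus ?thesis using QR by auto
qed

end

lemma min_poly_over_degree_pos: "min_poly_over E r m \<Longrightarrow> degree m \<noteq> 0"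
  unfolding min_poly_over_def by (metis degree_0_id one_neq_zero poly_const_conv)

lemma min_poly_overD:
  assumes "min_poly_over E r m"
  shows "poly_over E m" "poly m r = 0" "m \<noteq> 0"
    "\<And>h. poly_over E h \<Longrightarrow> h \<noteq> 0 \<Longrightarrow> poly h r = 0 \<Longrightarrow> degree m \<le> degree h"
  using assms unfolding min_poly_over_def by auto

definition adjoin :: "'k::field set \<Rightarrow> 'k \<Rightarrow> 'k set" where
  "adjoin E r = {poly g r | g. poly_over E g}"

context
  fixes E :: "'k::field set" and r :: 'k and m :: "'k poly"
  assumes E: "is_subfield E" and m: "min_poly_over E r m"
begin

lemma poly_in_adjoin: "poly_over E g \<Longrightarrow> poly g r \<in> adjoin E r"
  unfolding adjoin_def by blast

lemma subset_adjoin: "E \<subseteq> adjoin E r"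
  using poly_in_adjoin[OF poly_over_const[OF E]] by auto

lemma self_in_adjoin: "r \<in> adjoin E r"
  using poly_in_adjoin[OF poly_over_X[OF E]] by simp

text \<open>Inverting \<open>g(r)\<close> runs the Euclidean algorithm on \<open>m\<close> and \<open>g\<close>; minimality of \<open>m\<close> rules out
  an exact division.\<close>

lemma adjoin_inverse_poly:
  assumes "poly_over E g" "g \<noteq> 0" "degree g < degree m"
  shows "\<exists>z\<in>adjoin E r. poly g r * z = 1"
  using assms
proof (induction "degree g" arbitrary: g rule: less_induct)
  case less
  note m_over = min_poly_overD(1)[OF m] and m_root = min_poly_overD(2)[OF m]
    and m0 = min_poly_overD(3)[OF m] and m_min = min_poly_overD(4)[OF m]
  have gr: "poly g r \<noteq> 0" using m_min[of g] less.prems by fastforce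
  show ?case
  proof (cases "degree g = 0")
    case True
    then obtain c where gc: "g = [:c:]" using degree0_coeffs by blast
    have "c \<in> E" using less.prems(1) unfolding gc poly_over_def by (metis coeff_pCons_0)
    hence "poly [:inverse c:] r \<in> adjoin E r"
      by (intro poly_in_adjoin poly_over_const E subfield_inverse)
    then show ?thesis using gr gc by (intro bexI[of _ "poly [:inverse c:] r"]) auto
  next
    case False
    obtain Q Rm where QR: "poly_over E Q" "poly_over E Rm" "m = Q * g + Rm"
      "Rm = 0 \<or> degree Rm < degree g"
      using poly_over_divmod[OF E m_over less.prems(1,2)] by blast
    have "Rm \<noteq> 0"
    proof
      assume "Rm = 0"
      hence mQ: "m = Q * g" and "Q \<noteq> 0" using QR(3) m0 by auto
      moreover have "poly Q r = 0" using m_root mQ gr by simp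
      ultimately have "degree m \<le> degree Q" using m_min[OF QR(1)] by blast
      thus False using mQ \<open>Q \<noteq> 0\<close> less.prems(2) False by (simp add: degree_mult_eq)
    qed
    hence "degree Rm < degree g" using QR(4) by simp
    moreover from this have "degree Rm < degree m" using less.prems(3) by simp
    ultimately obtain z where z: "z \<in> adjoin E r" "poly Rm r * z = 1"
      using less.hyps QR(2) \<open>Rm \<noteq> 0\<close> by blast
    have "poly Rm r = - (poly Q r * poly g r)"
      using m_root QR(3) by (simp add: eq_neg_iff_add_eq_0 add.commute)
    hence "poly g r * (poly (- Q) r * z) = 1" using z(2) by (simp add: algebra_simps)
    moreover have "poly (- Q) r * z \<in> adjoin E r"
    proof -
      from z(1) obtain h where h: "poly_over E h" "z = poly h r" unfolding adjoin_def by blast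
      have "poly (- Q * h) r \<in> adjoin E r" using QR(1) h(1) E by (intro poly_in_adjoin) blast
      thus ?thesis using h(2) by simp
    qed
    ultimately show ?thesis by blast
  qed
qed

lemma is_subfield_adjoin: "is_subfield (adjoin E r)"
  unfolding is_subfield_def
proof (intro conjI ballI impI)
  show "0 \<in> adjoin E r" "1 \<in> adjoin E r" using subset_adjoin E by auto
  fix x assume "x \<in> adjoin E r"
  then obtain g where g: "poly_over E g" "x = poly g r" unfolding adjoin_def by blast
  show "- x \<in> adjoin E r" using poly_in_adjoin[of "- g"] g E by auto
  show "inverse x \<in> adjoin E r" if "x \<noteq> 0"
  proof -
    obtain Q g' where Qg: "poly_over E Q" "poly_over E g'" "g = Q * m + g'"
      "g' = 0 \<or> degree g' < degree m"
      using poly_over_divmod[OF E g(1) min_poly_overD(1,3)[OF m]] by blast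
    have x: "x = poly g' r" using g(2) Qg(3) min_poly_overD(2)[OF m] by simp
    with \<open>x \<noteq> 0\<close> Qg(4) have "g' \<noteq> 0" "degree g' < degree m" by auto
    then obtain z where "z \<in> adjoin E r" "x * z = 1" using adjoin_inverse_poly Qg(2) x by blast
    thus ?thesis by (metis inverse_unique)
  qed
  fix y assume "y \<in> adjoin E r"
  then obtain h where h: "poly_over E h" "y = poly h r" unfolding adjoin_def by blast
  show "x + y \<in> adjoin E r" "x * y \<in> adjoin E r"
    using poly_in_adjoin[of "g + h"] poly_in_adjoin[of "g * h"] g h E by auto
qed

end

definition hom_on :: "'k::field set \<Rightarrow> ('k \<Rightarrow> 'k) \<Rightarrow> bool" where
  "hom_on E t \<longleftrightarrow> t 1 = 1 \<and> (\<forall>x\<in>E. \<forall>y\<in>E. t (x + y) = t x + t y \<and> t (x * y) = t x * t y)"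

definition adjoin_hom :: "'k::field set \<Rightarrow> 'k \<Rightarrow> ('k \<Rightarrow> 'k) \<Rightarrow> 'k \<Rightarrow> 'k \<Rightarrow> 'k" where
  "adjoin_hom E r t s y = poly (map_poly t (SOME g. poly_over E g \<and> poly g r = y)) s"

context
  fixes E :: "'k::field set" and t :: "'k \<Rightarrow> 'k"
  assumes E: "is_subfield E" and t: "hom_on E t"
begin

lemma hom_on_1 [simp]: "t 1 = 1"
  using t unfolding hom_on_def by auto

lemma hom_on_add: "x \<in> E \<Longrightarrow> y \<in> E \<Longrightarrow> t (x + y) = t x + t y"
  and hom_on_mult: "x \<in> E \<Longrightarrow> y \<in> E \<Longrightarrow> t (x * y) = t x * t y"
  using t unfolding hom_on_def by auto

lemma hom_on_0 [simp]: "t 0 = 0"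
proof -
  have "t 0 = t 0 + t 0" using hom_on_add[of 0 0] E by simp
  thus ?thesis by (metis add_cancel_right_right)
qed

lemma hom_on_uminus:
  assumes "x \<in> E"
  shows "t (- x) = - t x"
proof -
  have "t x + t (- x) = 0" using hom_on_add[of x "- x"] assms subfield_uminus[OF E assms] by simp
  from minus_unique[OF this] show ?thesis by simp
qed

lemma hom_on_sum: "(\<And>i. i \<in> A \<Longrightarrow> f i \<in> E) \<Longrightarrow> t (sum f A) = (\<Sum>i\<in>A. t (f i))"
proof (induction A rule: infinite_finite_induct)
  case (insert x F)
  then show ?case using hom_on_add[of "f x" "sum f F"] subfield_sum[OF E, of F f] by auto
qed auto

lemma coeff_map_poly_hom_on: "coeff (map_poly t g) i = t (coeff g i)"
  by (simp add: coeff_map_poly)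

lemma map_poly_hom_on_add: "poly_over E g \<Longrightarrow> poly_over E h \<Longrightarrow>
    map_poly t (g + h) = map_poly t g + map_poly t h"
  by (rule poly_eqI) (simp add: coeff_map_poly_hom_on poly_over_def hom_on_add)

lemma map_poly_hom_on_diff: "poly_over E g \<Longrightarrow> poly_over E h \<Longrightarrow>
    map_poly t (g - h) = map_poly t g - map_poly t h"
  using map_poly_hom_on_add[of g "- h"] poly_over_uminus[OF E, of h]
  by (simp add: coeff_map_poly_hom_on poly_over_def hom_on_uminus poly_eq_iff)

lemma map_poly_hom_on_mult:
  assumes g: "poly_over E g" and h: "poly_over E h"
  shows "map_poly t (g * h) = map_poly t g * map_poly t h"
proof (rule poly_eqI)
  fix k
  have "coeff (map_poly t (g * h)) k = t (\<Sum>i\<le>k. coeff g i * coeff h (k - i))"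
    by (simp add: coeff_map_poly coeff_mult)
  also have "\<dots> = (\<Sum>i\<le>k. t (coeff g i) * t (coeff h (k - i)))"
    using g h E by (subst hom_on_sum) (auto simp: poly_over_def hom_on_mult)
  finally show "coeff (map_poly t (g * h)) k = coeff (map_poly t g * map_poly t h) k"
    by (simp add: coeff_map_poly coeff_mult)
qed

lemma map_poly_hom_on_const: "map_poly t [:c:] = [:t c:]"
  and map_poly_hom_on_X: "map_poly t [:0, 1:] = [:0, 1:]"
  by (rule poly_eqI, simp add: coeff_map_poly_hom_on coeff_pCons split: nat.splits)+

text \<open>Well defined because any two representatives of an element of \<open>adjoin E r\<close> differ by a
  multiple of the minimal polynomial \<open>m\<close> of \<open>r\<close>, whose image under \<open>t\<close> vanishes at \<open>s\<close>.\<close>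

lemma adjoin_hom_poly:
  assumes m: "min_poly_over E r m" and s: "poly (map_poly t m) s = 0" and g: "poly_over E g"
  shows "adjoin_hom E r t s (poly g r) = poly (map_poly t g) s"
proof -
  define g0 where "g0 = (SOME h. poly_over E h \<and> poly h r = poly g r)"
  have g0: "poly_over E g0" "poly g0 r = poly g r"
    using someI[of "\<lambda>h. poly_over E h \<and> poly h r = poly g r" g] g unfolding g0_def by auto
  obtain Q where Q: "poly_over E Q" "g0 - g = Q * m"
    using min_poly_over_dvd[OF E m, of "g0 - g"] g g0 E by auto
  have "map_poly t g0 - map_poly t g = map_poly t (g0 - g)"
    by (rule map_poly_hom_on_diff[OF g0(1) g, symmetric])
  also have "\<dots> = map_poly t Q * map_poly t m"
    unfolding Q(2) by (rule map_poly_hom_on_mult[OF Q(1) min_poly_overD(1)[OF m]])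
  finally have "poly (map_poly t g0) s - poly (map_poly t g) s = 0"
    using s by (metis mult_zero_right poly_diff poly_mult)
  then show ?thesis unfolding adjoin_hom_def g0_def[symmetric] by simp
qed

lemma hom_on_adjoin_hom:
  assumes m: "min_poly_over E r m" and s: "poly (map_poly t m) s = 0"
  shows "hom_on (adjoin E r) (adjoin_hom E r t s)"
  unfolding hom_on_def
proof (intro conjI ballI)
  note ext = adjoin_hom_poly[OF m s]
  show "adjoin_hom E r t s 1 = 1"
    using ext[OF poly_over_1[OF E]] map_poly_hom_on_const[of 1] by (simp add: one_pCons)
  fix x y assume "x \<in> adjoin E r" "y \<in> adjoin E r"
  then obtain g h where g: "poly_over E g" "x = poly g r" and h: "poly_over E h" "y = poly h r"
    unfolding adjoin_def by blast
  have "adjoin_hom E r t s (x + y) = adjoin_hom E r t s (poly (g + h) r)" using g(2) h(2) by simp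
  also have "\<dots> = poly (map_poly t (g + h)) s" using g(1) h(1) E by (intro ext) auto
  also have "\<dots> = adjoin_hom E r t s x + adjoin_hom E r t s y"
    using map_poly_hom_on_add[OF g(1) h(1)] g h by (simp add: ext)
  finally show "adjoin_hom E r t s (x + y) = adjoin_hom E r t s x + adjoin_hom E r t s y" .
  have "adjoin_hom E r t s (x * y) = adjoin_hom E r t s (poly (g * h) r)" using g(2) h(2) by simp
  also have "\<dots> = poly (map_poly t (g * h)) s" using g(1) h(1) E by (intro ext) auto
  also have "\<dots> = adjoin_hom E r t s x * adjoin_hom E r t s y"
    using map_poly_hom_on_mult[OF g(1) h(1)] g h by (simp add: ext)
  finally show "adjoin_hom E r t s (x * y) = adjoin_hom E r t s x * adjoin_hom E r t s y" .
qed

lemma adjoin_hom_extends: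
  assumes m: "min_poly_over E r m" and s: "poly (map_poly t m) s = 0"
  shows "x \<in> E \<Longrightarrow> adjoin_hom E r t s x = t x" and "adjoin_hom E r t s r = s"
  using adjoin_hom_poly[OF m s poly_over_const[OF E]] adjoin_hom_poly[OF m s poly_over_X[OF E]]
    map_poly_hom_on_const map_poly_hom_on_X by simp_all

end

section \<open>Galois groups of splitting fields\<close>

lemma ring_hom_fun_field_hom:
  assumes "ring_hom_fun (f :: 'a::field \<Rightarrow> 'b::field)"
  shows "field_hom f"
proof -
  have f1: "f 1 = 1" and f_add: "\<And>x y. f (x + y) = f x + f y"
    and f_mult: "\<And>x y. f (x * y) = f x * f y"
    using assms unfolding ring_hom_fun_def by auto
  have "f 0 = f 0 + f 0" using f_add[of 0 0] by simp
  hence f0: "f 0 = 0" by (metis add_cancel_right_right)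
  show ?thesis by unfold_locales (auto simp: f0 f1 f_add f_mult)
qed

lemma is_subfield_range_field_hom:
  assumes "field_hom f"
  shows "is_subfield (range f)"
proof -
  interpret f: field_hom f by (rule assms)
  show ?thesis
    unfolding is_subfield_def
  proof (intro conjI ballI impI)
    show "0 \<in> range f" "1 \<in> range f" by (metis f.hom_zero f.hom_one rangeI)+
    fix x y assume "x \<in> range f" "y \<in> range f"
    then obtain a b where x: "x = f a" and y: "y = f b" by blast
    show "x + y \<in> range f" unfolding x y by (metis f.hom_add rangeI)
    show "x * y \<in> range f" unfolding x y by (metis f.hom_mult rangeI)
    show "- x \<in> range f" unfolding x by (metis f.hom_uminus rangeI)
    show "inverse x \<in> range f" unfolding x by (metis f.hom_inverse rangeI)
  qed
qed

lemma dvd_split_poly_has_root: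
  fixes f :: "'k::field poly"
  assumes "f dvd (\<Prod>a\<leftarrow>xs. [:- a, 1:])" "degree f \<noteq> 0"
  shows "\<exists>a\<in>set xs. poly f a = 0"
  using assms(1)
proof (induction xs)
  case Nil
  then show ?case using assms(2) by (simp add: poly_dvd_1)
next
  case (Cons a xs)
  show ?case
  proof (cases "poly f a = 0")
    case False
    have "f dvd [:- a, 1:] * (\<Prod>a\<leftarrow>xs. [:- a, 1:])"
      using Cons.prems by (simp only: list.map prod_list.Cons)
    then obtain g where g: "[:- a, 1:] * (\<Prod>a\<leftarrow>xs. [:- a, 1:]) = f * g" by (rule dvdE)
    have "poly g a = 0" using arg_cong[OF g, of "\<lambda>p. poly p a"] False by simp
    then obtain g' where g': "g = [:- a, 1:] * g'" by (metis dvdE poly_eq_0_iff_dvd)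
    have "[:- a, 1:] * (\<Prod>a\<leftarrow>xs. [:- a, 1:]) = [:- a, 1:] * (f * g')"
      unfolding g g' by (simp only: mult_ac)
    hence "(\<Prod>a\<leftarrow>xs. [:- a, 1:]) = f * g'" by (subst (asm) mult_left_cancel) simp_all
    then show ?thesis using Cons.IH by auto
  qed simp
qed

locale splitting_field_ext =
  fixes \<phi> :: "'f::field \<Rightarrow> 'k::field" and L :: "'f poly"
  assumes splitting: "splitting_field \<phi> L" and L_nonzero: "L \<noteq> 0"
begin

sublocale phi: field_hom \<phi>
  using splitting ring_hom_fun_field_hom unfolding splitting_field_def by blast

sublocale map_phi: map_poly_inj_idom_hom \<phi> ..

definition root_set :: "'k set" where
  "root_set = {a. poly (map_poly \<phi> L) a = 0}"

lemma finite_root_set: "finite root_set"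
  unfolding root_set_def using L_nonzero by (simp add: poly_roots_finite)

lemma is_subfield_range_phi: "is_subfield (range \<phi>)"
  by (rule is_subfield_range_field_hom) unfold_locales

lemma poly_over_map_phi: "range \<phi> \<subseteq> E \<Longrightarrow> poly_over E (map_poly \<phi> g)"
  unfolding poly_over_def by (auto simp: coeff_map_poly)

lemma poly_over_range_phi_imp_map_poly:
  assumes "poly_over (range \<phi>) g"
  shows "\<exists>g0. g = map_poly \<phi> g0"
proof -
  have "inv_into UNIV \<phi> 0 = 0" by (metis phi.hom_zero phi.inj_f inv_f_f)
  then have "g = map_poly \<phi> (map_poly (inv_into UNIV \<phi>) g)"
    using assms unfolding poly_over_def by (intro poly_eqI) (simp add: coeff_map_poly f_inv_into_f)
  then show ?thesis ..
qed

lemma map_poly_fixing_range_phi: "(\<And>c. t (\<phi> c) = \<phi> c) \<Longrightarrow> map_poly t (map_poly \<phi> g) = map_poly \<phi> g"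
  by (intro poly_eqI) (metis coeff_map_poly phi.hom_zero)

lemma subfield_containing_root_set:
  "is_subfield S \<Longrightarrow> range \<phi> \<subseteq> S \<Longrightarrow> root_set \<subseteq> S \<Longrightarrow> S = UNIV"
  using splitting unfolding splitting_field_def root_set_def by blast

lemma galois_groupI:
  assumes "ring_hom_fun \<sigma>" "\<And>c. \<sigma> (\<phi> c) = \<phi> c"
  shows "\<sigma> \<in> galois_group \<phi>"
proof -
  interpret s: field_hom \<sigma> by (rule ring_hom_fun_field_hom[OF assms(1)])
  have "map_poly \<sigma> (map_poly \<phi> L) = map_poly \<phi> L" using assms(2) by (rule map_poly_fixing_range_phi)
  hence "poly (map_poly \<phi> L) (\<sigma> x) = \<sigma> (poly (map_poly \<phi> L) x)" for x
    using s.poly_map_poly[of "map_poly \<phi> L" x] by simp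
  hence sub: "\<sigma> ` root_set \<subseteq> root_set" unfolding root_set_def by auto
  have "card (\<sigma> ` root_set) = card root_set"
    by (rule card_image[OF inj_on_subset[OF s.inj_f subset_UNIV]])
  hence "\<sigma> ` root_set = root_set" by (rule card_subset_eq[OF finite_root_set sub])
  hence "root_set \<subseteq> range \<sigma>" by auto
  moreover have "range \<phi> \<subseteq> range \<sigma>" using assms(2) by (metis image_subsetI rangeI)
  ultimately have "range \<sigma> = UNIV"
    using subfield_containing_root_set[OF is_subfield_range_field_hom[OF s.field_hom_axioms]] by blast
  then show ?thesis using assms s.inj_f unfolding galois_group_def bij_def by auto
qed

lemma galois_group_field_hom: "\<sigma> \<in> galois_group \<phi> \<Longrightarrow> field_hom \<sigma>"
  unfolding galois_group_def by (auto intro: ring_hom_fun_field_hom)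

lemma galois_group_fixes: "\<sigma> \<in> galois_group \<phi> \<Longrightarrow> \<sigma> (\<phi> c) = \<phi> c"
  unfolding galois_group_def by auto

lemma galois_group_comp: "\<sigma> \<in> galois_group \<phi> \<Longrightarrow> \<tau> \<in> galois_group \<phi> \<Longrightarrow> \<sigma> \<circ> \<tau> \<in> galois_group \<phi>"
  unfolding galois_group_def ring_hom_fun_def by (auto intro: bij_comp)

lemma galois_group_root_set:
  assumes "\<sigma> \<in> galois_group \<phi>" "x \<in> root_set"
  shows "\<sigma> x \<in> root_set"
proof -
  interpret s: field_hom \<sigma> by (rule galois_group_field_hom[OF assms(1)])
  have "poly (map_poly \<phi> L) (\<sigma> x) = \<sigma> (poly (map_poly \<phi> L) x)"
    using s.poly_map_poly[of "map_poly \<phi> L" x] map_poly_fixing_range_phi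
      galois_group_fixes[OF assms(1)]
    by simp
  then show ?thesis using assms(2) unfolding root_set_def by simp
qed

lemma galois_group_eqI:
  assumes \<sigma>: "\<sigma> \<in> galois_group \<phi>" and \<tau>: "\<tau> \<in> galois_group \<phi>" and eq: "\<And>x. x \<in> root_set \<Longrightarrow> \<sigma> x = \<tau> x"
  shows "\<sigma> = \<tau>"
proof -
  interpret s: field_hom \<sigma> by (rule galois_group_field_hom[OF \<sigma>])
  interpret t: field_hom \<tau> by (rule galois_group_field_hom[OF \<tau>])
  have "is_subfield {x. \<sigma> x = \<tau> x}"
    unfolding is_subfield_def by (simp add: s.hom_add t.hom_add s.hom_mult t.hom_mult s.hom_uminus
        t.hom_uminus s.hom_inverse t.hom_inverse)
  then have "{x. \<sigma> x = \<tau> x} = UNIV"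
    using galois_group_fixes[OF \<sigma>] galois_group_fixes[OF \<tau>] eq
    by (intro subfield_containing_root_set) auto
  then show ?thesis by auto
qed

text \<open>The image under \<open>t\<close> of the minimal polynomial of \<open>r\<close> divides \<open>L\<close>, which splits.\<close>

lemma min_poly_image_has_root:
  assumes E: "is_subfield E" and range_E: "range \<phi> \<subseteq> E" and t: "hom_on E t"
    and t_fix: "\<And>c. t (\<phi> c) = \<phi> c" and r: "r \<in> root_set"
  shows "\<exists>m s. min_poly_over E r m \<and> poly (map_poly t m) s = 0"
proof -
  let ?P = "map_poly \<phi> L"
  have P: "poly_over E ?P" "?P \<noteq> 0" "poly ?P r = 0"
    using poly_over_map_phi[OF range_E] L_nonzero r unfolding root_set_def by auto
  obtain m where m: "min_poly_over E r m" using min_poly_over_exists[OF E P] by blast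
  obtain Q where Q: "poly_over E Q" "?P = Q * m" using min_poly_over_dvd[OF E m P(1,3)] by blast
  have "?P = map_poly t ?P" using t_fix by (rule map_poly_fixing_range_phi[symmetric])
  also have "\<dots> = map_poly t Q * map_poly t m"
    by (subst Q(2)) (rule map_poly_hom_on_mult[OF E t Q(1) min_poly_overD(1)[OF m]])
  finally have t_m_dvd: "map_poly t m dvd ?P" by simp
  obtain c xs where c: "?P = smult c (\<Prod>a\<leftarrow>xs. [:- a, 1:])"
    using splitting unfolding splitting_field_def splits_def by blast
  have "c \<noteq> 0" using c P(2) by auto
  hence "map_poly t m dvd (\<Prod>a\<leftarrow>xs. [:- a, 1:])"
    using dvd_smult_cancel[of "map_poly t m" c] t_m_dvd c by simp
  moreover have "lead_coeff m = 1" using m unfolding min_poly_over_def by blast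
  hence "coeff (map_poly t m) (degree m) = 1"
    by (simp add: coeff_map_poly_hom_on[OF E t] hom_on_1[OF E t])
  hence "degree (map_poly t m) \<noteq> 0"
    using le_degree[of "map_poly t m" "degree m"] min_poly_over_degree_pos[OF m] by simp
  ultimately show ?thesis using m dvd_split_poly_has_root by blast
qed

lemma hom_on_extends_to_ring_hom:
  "is_subfield E \<Longrightarrow> range \<phi> \<subseteq> E \<Longrightarrow> hom_on E t \<Longrightarrow> (\<And>c. t (\<phi> c) = \<phi> c) \<Longrightarrow>
    \<exists>\<sigma>. ring_hom_fun \<sigma> \<and> (\<forall>x\<in>E. \<sigma> x = t x)"
proof (induction "card (root_set - E)" arbitrary: E t rule: less_induct)
  case less
  note E = less.prems(1) and range_E = less.prems(2) and t = less.prems(3) and t_fix = less.prems(4)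
  show ?case
  proof (cases "root_set \<subseteq> E")
    case True
    hence "E = UNIV" using subfield_containing_root_set E range_E by blast
    hence "ring_hom_fun t" using t unfolding hom_on_def ring_hom_fun_def by auto
    thus ?thesis by blast
  next
    case False
    then obtain r where r: "r \<in> root_set" "r \<notin> E" by blast
    obtain m s where m: "min_poly_over E r m" and s: "poly (map_poly t m) s = 0"
      using min_poly_image_has_root[OF E range_E t t_fix r(1)] by blast
    note t'_ext = adjoin_hom_extends(1)[OF E t m s]
    have "card (root_set - adjoin E r) < card (root_set - E)"
      using finite_root_set subset_adjoin[OF E m] self_in_adjoin[OF E m] r
      by (intro psubset_card_mono) auto
    moreover have "range \<phi> \<subseteq> adjoin E r" using range_E subset_adjoin[OF E m] by blast
    moreover have "adjoin_hom E r t s (\<phi> c) = \<phi> c" for c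
      using t'_ext t_fix range_E by (simp add: image_subset_iff)
    ultimately obtain \<sigma> where \<sigma>: "ring_hom_fun \<sigma>" "\<forall>x\<in>adjoin E r. \<sigma> x = adjoin_hom E r t s x"
      using less.hyps[OF _ is_subfield_adjoin[OF E m] _ hom_on_adjoin_hom[OF E t m s]] by blast
    have "\<forall>x\<in>E. \<sigma> x = t x" using \<sigma>(2) t'_ext subset_adjoin[OF E m] by auto
    with \<sigma>(1) show ?thesis by blast
  qed
qed

lemma hom_on_extends_to_galois_group:
  assumes "is_subfield E" "range \<phi> \<subseteq> E" "hom_on E t" "\<And>c. t (\<phi> c) = \<phi> c"
  shows "\<exists>\<sigma>\<in>galois_group \<phi>. \<forall>x\<in>E. \<sigma> x = t x"
proof -
  obtain \<sigma> where \<sigma>: "ring_hom_fun \<sigma>" "\<forall>x\<in>E. \<sigma> x = t x"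
    using hom_on_extends_to_ring_hom[OF assms] by blast
  have "\<sigma> (\<phi> c) = \<phi> c" for c using \<sigma>(2) assms(2,4) by (simp add: image_subset_iff)
  with \<sigma> show ?thesis using galois_groupI by blast
qed

text \<open>\<open>\<alpha> \<mapsto> \<beta>\<close> extends the identity of the base field to the field generated by \<open>\<alpha>\<close>, since the
  minimal polynomial of \<open>\<alpha>\<close> is a scalar multiple of \<open>g\<close>.\<close>

lemma galois_group_transitive_on_roots:
  assumes g: "irreducible g" and \<alpha>: "poly (map_poly \<phi> g) \<alpha> = 0" and \<beta>: "poly (map_poly \<phi> g) \<beta> = 0"
  shows "\<exists>\<sigma>\<in>galois_group \<phi>. \<sigma> \<alpha> = \<beta>"
proof -
  let ?F = "range \<phi>"
  have g0: "map_poly \<phi> g \<noteq> 0" using g by auto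
  obtain m where m: "min_poly_over ?F \<alpha> m"
    using min_poly_over_exists[OF is_subfield_range_phi poly_over_map_phi g0 \<alpha>] by blast
  obtain Q where Q: "poly_over ?F Q" "map_poly \<phi> g = Q * m"
    using min_poly_over_dvd[OF is_subfield_range_phi m poly_over_map_phi \<alpha>] by blast
  obtain Q0 where Q0: "Q = map_poly \<phi> Q0" using poly_over_range_phi_imp_map_poly[OF Q(1)] by blast
  obtain m0 where m0: "m = map_poly \<phi> m0"
    using poly_over_range_phi_imp_map_poly[OF min_poly_overD(1)[OF m]] by blast
  have "g = Q0 * m0" using Q(2) unfolding Q0 m0 map_phi.hom_mult[symmetric] by simp
  moreover have "\<not> m0 dvd 1"
    using min_poly_over_degree_pos[OF m] unfolding m0 by (simp add: poly_dvd_1)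
  ultimately have "Q0 dvd 1" using g unfolding irreducible_def by blast
  hence "degree Q = 0" unfolding Q0 by (simp add: poly_dvd_1)
  then obtain c where c: "Q = [:c:]" using degree0_coeffs by blast
  have "c \<noteq> 0" using g0 Q(2) c by auto
  hence m_\<beta>: "poly (map_poly id m) \<beta> = 0" using \<beta> Q(2) c by (simp add: map_poly_id)
  have id: "hom_on ?F id" unfolding hom_on_def by simp
  note ext = adjoin_hom_extends[OF is_subfield_range_phi id m m_\<beta>]
  obtain \<sigma> where \<sigma>: "\<sigma> \<in> galois_group \<phi>" "\<forall>x\<in>adjoin ?F \<alpha>. \<sigma> x = adjoin_hom ?F \<alpha> id \<beta> x"
    using hom_on_extends_to_galois_group[OF is_subfield_adjoin[OF is_subfield_range_phi m] _
        hom_on_adjoin_hom[OF is_subfield_range_phi id m m_\<beta>]]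
      subset_adjoin[OF is_subfield_range_phi m]
      ext(1) by auto
  have "\<sigma> \<alpha> = adjoin_hom ?F \<alpha> id \<beta> \<alpha>" using \<sigma>(2) self_in_adjoin[OF is_subfield_range_phi m] by blast
  with \<sigma>(1) ext(2) show ?thesis by auto
qed

end

section \<open>\<open>q\<close>-polynomials over a field of characteristic \<open>p\<close>\<close>

lemma Fq_set_power: "c \<in> Fq_set q \<Longrightarrow> c ^ (q ^ k) = c"
proof (induction k)
  case (Suc k)
  then show ?case unfolding Fq_set_def by (simp add: power_mult)
qed simp

lemma finite_card_Fq_set:
  assumes "1 < q"
  shows "finite (Fq_set q :: 'a::field set)" "card (Fq_set q :: 'a set) \<le> q"
proof -
  define g :: "'a poly" where "g = monom 1 q - [:0, 1:]"
  have "coeff g q = 1" using assms unfolding g_def by (simp add: coeff_pCons split: nat.splits)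
  hence g0: "g \<noteq> 0" by auto
  have "degree g \<le> q" unfolding g_def using assms
    by (intro order.trans[OF degree_diff_le_max]) (auto simp: degree_monom_le)
  moreover have "{x. poly g x = 0} = Fq_set q"
    unfolding g_def Fq_set_def by (auto simp: poly_monom)
  ultimately show "finite (Fq_set q :: 'a set)" "card (Fq_set q :: 'a set) \<le> q"
    using poly_roots_finite[OF g0] card_poly_roots_bound[OF g0] by auto
qed

context
  fixes q e :: nat
  assumes prime_char: "prime CHAR('k::field)" and q_char_power: "q = CHAR('k) ^ e"
begin

lemma q_pos: "0 < q"
  using prime_char q_char_power by (simp add: prime_gt_0_nat)

lemma one_less_q: "e \<noteq> 0 \<Longrightarrow> 1 < q"
  using one_less_power[OF prime_gt_1_nat[OF prime_char]] q_char_power by simp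

lemma frobenius_add: "(x + y :: 'k) ^ (q ^ k) = x ^ (q ^ k) + y ^ (q ^ k)"
  by (rule freshmans_dream'[OF prime_char, where n = "e * k"]) (simp add: q_char_power power_mult)

lemma frobenius_sum: "(sum f A :: 'k) ^ (q ^ k) = (\<Sum>i\<in>A. f i ^ (q ^ k))"
  by (rule freshmans_dream_sum'[OF prime_char, where n = "e * k"]) (simp add: q_char_power power_mult)

lemma is_subfield_Fq_set: "is_subfield (Fq_set q :: 'k set)"
proof -
  have "(x + y) ^ q = x + y" if "x ^ q = x" "y ^ q = y" for x y :: 'k
    using frobenius_add[of x y 1] that by simp
  moreover have "(- x) ^ q = - x" if "x ^ q = x" for x :: 'k
  proof -
    have "x ^ q + (- x) ^ q = 0" using frobenius_add[of x "- x" 1] q_pos by (simp add: zero_power)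
    then show ?thesis using that by (simp add: eq_neg_iff_add_eq_0 add.commute)
  qed
  ultimately show ?thesis
    unfolding is_subfield_def Fq_set_def using q_pos by (auto simp: power_mult_distrib power_inverse)
qed

lemma poly_q_polynomial_add:
  assumes "q_polynomial q (g :: 'k poly)"
  shows "poly g (x + y) = poly g x + poly g y"
proof -
  have summand: "coeff g i * (x + y) ^ i = coeff g i * x ^ i + coeff g i * y ^ i" for i
    using assms frobenius_add unfolding q_polynomial_def
    by (cases "coeff g i = 0") (auto simp: algebra_simps)
  have "poly g (x + y) = (\<Sum>i\<le>degree g. coeff g i * x ^ i + coeff g i * y ^ i)"
    unfolding poly_altdef by (intro sum.cong refl summand)
  then show ?thesis by (simp add: poly_altdef sum.distrib)
qed

lemma poly_q_polynomial_smult: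
  assumes "q_polynomial q (g :: 'k poly)" "c \<in> Fq_set q"
  shows "poly g (c * x) = c * poly g x"
proof -
  have summand: "coeff g i * (c * x) ^ i = c * (coeff g i * x ^ i)" for i
    using assms Fq_set_power unfolding q_polynomial_def
    by (cases "coeff g i = 0") (auto simp: power_mult_distrib algebra_simps)
  have "poly g (c * x) = (\<Sum>i\<le>degree g. c * (coeff g i * x ^ i))"
    unfolding poly_altdef by (intro sum.cong refl summand)
  then show ?thesis by (simp add: poly_altdef sum_distrib_left)
qed

lemma poly_q_polynomial_0:
  assumes "q_polynomial q (g :: 'k poly)"
  shows "poly g 0 = 0"
proof -
  have "coeff g 0 = 0"
  proof (rule ccontr)
    assume "coeff g 0 \<noteq> 0"
    then obtain k where "0 = q ^ k" using assms unfolding q_polynomial_def by blast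
    with q_pos show False by simp
  qed
  then show ?thesis by (simp add: poly_0_coeff_0)
qed

lemma poly_q_polynomial_sum:
  "q_polynomial q (g :: 'k poly) \<Longrightarrow> poly g (sum f A) = (\<Sum>i\<in>A. poly g (f i))"
  by (induction A rule: infinite_finite_induct) (auto simp: poly_q_polynomial_0 poly_q_polynomial_add)

text \<open>Every exponent \<open>q\<^sup>k\<close> with \<open>k \<ge> 1\<close> is divisible by the characteristic.\<close>

lemma pderiv_q_polynomial:
  assumes "q_polynomial q (g :: 'k poly)" "e \<noteq> 0"
  shows "pderiv g = [:coeff g 1:]"
proof (rule poly_eqI)
  fix i
  have "of_nat (Suc i) * coeff g (Suc i) = (0::'k)" if "i \<noteq> 0"
  proof (cases "coeff g (Suc i) = 0")
    case False
    then obtain k where k: "Suc i = q ^ k" using assms(1) unfolding q_polynomial_def by blast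
    with that have "k \<noteq> 0" by (cases k) auto
    then have "CHAR('k) dvd q ^ k" using assms(2) by (simp add: q_char_power power_mult[symmetric])
    then have "(of_nat (Suc i) :: 'k) = 0" unfolding k by (simp only: of_nat_eq_0_iff_char_dvd)
    then show ?thesis by simp
  qed simp
  then show "coeff (pderiv g) i = coeff [:coeff g 1:] i"
    by (cases i) (simp_all add: coeff_pderiv)
qed

end

lemma poly_q_polynomial:
  assumes "q_polynomial q g" "degree g = q ^ n" "1 < q"
  shows "poly g x = (\<Sum>k\<le>n. coeff g (q ^ k) * x ^ (q ^ k))"
proof -
  have "poly g x = (\<Sum>i\<le>q ^ n. coeff g i * x ^ i)" unfolding poly_altdef assms(2) ..
  also have "\<dots> = (\<Sum>i\<in>(\<lambda>k. q ^ k) ` {..n}. coeff g i * x ^ i)"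
  proof (rule sum.mono_neutral_right)
    show "(\<lambda>k. q ^ k) ` {..n} \<subseteq> {..q ^ n}" using assms(3) by (auto intro: power_increasing)
    show "\<forall>i\<in>{..q ^ n} - (\<lambda>k. q ^ k) ` {..n}. coeff g i * x ^ i = 0"
    proof
      fix i assume i: "i \<in> {..q ^ n} - (\<lambda>k. q ^ k) ` {..n}"
      show "coeff g i * x ^ i = 0"
      proof (cases "coeff g i = 0")
        case False
        then obtain k where "i = q ^ k" using assms(1) unfolding q_polynomial_def by blast
        moreover from this have "k \<le> n" using i power_le_imp_le_exp[OF assms(3)] by auto
        ultimately show ?thesis using i by auto
      qed simp
    qed
  qed simp
  also have "\<dots> = (\<Sum>k\<le>n. coeff g (q ^ k) * x ^ (q ^ k))"
    using assms(3) by (subst sum.reindex) (auto simp: inj_on_def power_inject_exp)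
  finally show ?thesis .
qed

lemma distinct_roots_separable:
  fixes xs :: "'k::field list"
  assumes "pderiv (\<Prod>a\<leftarrow>xs. [:- a, 1:]) = [:d:]" "d \<noteq> 0"
  shows "distinct xs"
proof (rule ccontr)
  assume "\<not> distinct xs"
  then obtain as y bs cs where xs: "xs = as @ [y] @ bs @ [y] @ cs" using not_distinct_decomp by blast
  define h where "h = [:- y, 1:]"
  define Q where "Q = (\<Prod>a\<leftarrow>as @ bs @ cs. [:- a, 1:])"
  have "(\<Prod>a\<leftarrow>xs. [:- a, 1:]) = h * h * Q" unfolding xs h_def Q_def
    by (simp del: mult_pCons_left mult_pCons_right add: mult_ac)
  then have "pderiv (\<Prod>a\<leftarrow>xs. [:- a, 1:]) = h * (h * pderiv Q + Q * pderiv h + Q * pderiv h)"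
    by (simp add: pderiv_mult algebra_simps)
  then have "poly (pderiv (\<Prod>a\<leftarrow>xs. [:- a, 1:])) y = 0" unfolding h_def by simp
  then show False using assms by simp
qed

lemma card_roots_split_separable:
  fixes P :: "'k::field poly"
  assumes "P = smult c (\<Prod>a\<leftarrow>xs. [:- a, 1:])" "c \<noteq> 0" "pderiv P = [:d:]" "d \<noteq> 0"
  shows "card {x. poly P x = 0} = degree P"
proof -
  have "pderiv (\<Prod>a\<leftarrow>xs. [:- a, 1:]) = [:d / c:]"
    using arg_cong[OF assms(3), of "smult (inverse c)"] assms(1,2)
    by (simp add: pderiv_smult divide_inverse mult.commute)
  then have "distinct xs" using distinct_roots_separable[of xs "d / c"] assms(2,4) by simp
  moreover have "{x. poly P x = 0} = set xs" using assms(1,2) by (induction xs arbitrary: P) auto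
  moreover have "degree P = length xs" using assms(1,2) by (simp add: degree_linear_factors)
  ultimately show ?thesis by (simp add: distinct_card)
qed

section \<open>Coordinates with respect to a basis over a finite subfield\<close>

definition vecs_over :: "'a set \<Rightarrow> nat \<Rightarrow> 'a vec set" where
  "vecs_over E n = {v \<in> carrier_vec n. \<forall>i<n. v $ i \<in> E}"

definition lin_comb :: "'a::comm_semiring_1 vec \<Rightarrow> (nat \<Rightarrow> 'a) \<Rightarrow> 'a" where
  "lin_comb c b = (\<Sum>i<dim_vec c. c $ i * b i)"

lemma vecs_over_carrier: "c \<in> vecs_over E n \<Longrightarrow> c \<in> carrier_vec n"
  and vecs_over_index: "c \<in> vecs_over E n \<Longrightarrow> i < n \<Longrightarrow> c $ i \<in> E"
  unfolding vecs_over_def by auto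

lemma bij_betw_PiE_vecs_over: "bij_betw (vec n) (Pi\<^sub>E {..<n} (\<lambda>_. E)) (vecs_over E n)"
proof (rule bij_betwI')
  fix f g assume f: "f \<in> Pi\<^sub>E {..<n} (\<lambda>_. E)" and g: "g \<in> Pi\<^sub>E {..<n} (\<lambda>_. E)"
  show "(vec n f = vec n g) = (f = g)"
  proof
    assume "vec n f = vec n g"
    hence "f i = g i" if "i < n" for i using that by (metis index_vec)
    thus "f = g" using f g by (metis PiE_arb ext lessThan_iff)
  qed simp
next
  fix v assume v: "v \<in> vecs_over E n"
  show "\<exists>f\<in>Pi\<^sub>E {..<n} (\<lambda>_. E). v = vec n f"
    using v unfolding vecs_over_def by (intro bexI[of _ "restrict (($) v) {..<n}"]) auto
qed (auto simp: vecs_over_def)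

lemma card_vecs_over: "card (vecs_over E n) = card E ^ n"
proof -
  have "card (vecs_over E n) = card (Pi\<^sub>E {..<n} (\<lambda>_. E))"
    by (rule bij_betw_same_card[OF bij_betw_PiE_vecs_over, symmetric])
  also have "\<dots> = card E ^ n" by (simp add: card_PiE)
  finally show ?thesis .
qed

lemma lin_comb_cong: "(\<And>i. i < dim_vec c \<Longrightarrow> b i = b' i) \<Longrightarrow> lin_comb c b = lin_comb c b'"
  unfolding lin_comb_def by (rule sum.cong) auto

lemma lin_comb_Suc:
  "c \<in> carrier_vec (Suc k) \<Longrightarrow> lin_comb c b = lin_comb (vec_first c k) b + c $ k * b k"
  unfolding lin_comb_def vec_first_def by simp

lemma lin_comb_mult_mat_vec:
  assumes "A \<in> carrier_mat m n" "c \<in> carrier_vec n"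
  shows "lin_comb (A *\<^sub>v c) b = lin_comb c (\<lambda>j. lin_comb (col A j) b)"
proof -
  have "lin_comb (A *\<^sub>v c) b = (\<Sum>i<m. \<Sum>j<n. A $$ (i, j) * c $ j * b i)"
    using assms by (simp add: lin_comb_def scalar_prod_def lessThan_atLeast0 sum_distrib_right)
  also have "\<dots> = (\<Sum>j<n. \<Sum>i<m. A $$ (i, j) * c $ j * b i)" by (rule sum.swap)
  also have "\<dots> = lin_comb c (\<lambda>j. lin_comb (col A j) b)"
    using assms by (simp add: lin_comb_def sum_distrib_left mult_ac)
  finally show ?thesis .
qed

lemma mult_mat_vec_vecs_over:
  assumes E: "is_subfield E" and A: "A \<in> carrier_mat m n" "\<And>i j. i < m \<Longrightarrow> j < n \<Longrightarrow> A $$ (i, j) \<in> E"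
    and c: "c \<in> vecs_over E n"
  shows "A *\<^sub>v c \<in> vecs_over E m"
  using A vecs_over_carrier[OF c] vecs_over_index[OF c]
  unfolding vecs_over_def
  by (auto simp: scalar_prod_def intro!: subfield_sum[OF E] subfield_mult[OF E])

lemma inj_on_lin_comb_extend:
  assumes E: "is_subfield E" and inj: "inj_on (\<lambda>c. lin_comb c b) (vecs_over E k)"
    and r: "r \<notin> (\<lambda>c. lin_comb c b) ` vecs_over E k"
  shows "inj_on (\<lambda>c. lin_comb c (b(k := r))) (vecs_over E (Suc k))"
proof -
  define b' where "b' = b(k := r)"
  have b'_first: "lin_comb (vec_first c k) b' = lin_comb (vec_first c k) b" for c
    unfolding b'_def by (rule lin_comb_cong) simp
  have b'_split: "lin_comb c b' = lin_comb (vec_first c k) b + c $ k * r"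
    if "c \<in> carrier_vec (Suc k)" for c
    using lin_comb_Suc[OF that, of b'] unfolding b'_first by (simp add: b'_def)
  have "inj_on (\<lambda>c. lin_comb c b') (vecs_over E (Suc k))"
  proof (rule inj_onI)
    fix c d assume c: "c \<in> vecs_over E (Suc k)" and d: "d \<in> vecs_over E (Suc k)"
      and eq: "lin_comb c b' = lin_comb d b'"
    have c': "vec_first c k \<in> vecs_over E k" and d': "vec_first d k \<in> vecs_over E k"
      using c d unfolding vecs_over_def vec_first_def by auto
    have eq': "lin_comb (vec_first c k) b + c $ k * r = lin_comb (vec_first d k) b + d $ k * r"
      using eq b'_split vecs_over_carrier[OF c] vecs_over_carrier[OF d] by simp
    have "c $ k = d $ k"
    proof (rule ccontr)
      assume ne: "c $ k \<noteq> d $ k"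
      define f where "f = vec k (\<lambda>i. (d $ i - c $ i) / (c $ k - d $ k))"
      have f: "f \<in> vecs_over E k"
        using vecs_over_index[OF c] vecs_over_index[OF d] unfolding f_def vecs_over_def
        by (auto intro!: subfield_divide[OF E] subfield_diff[OF E])
      have "lin_comb f b = (lin_comb (vec_first d k) b - lin_comb (vec_first c k) b) / (c $ k - d $ k)"
        unfolding lin_comb_def f_def vec_first_def
        by (simp add: sum_divide_distrib[symmetric] sum_subtractf[symmetric] left_diff_distrib)
      also have "lin_comb (vec_first d k) b - lin_comb (vec_first c k) b = (c $ k - d $ k) * r"
        using eq' by (simp add: algebra_simps)
      finally have "lin_comb f b = r" using ne by simp
      then show False using f r by blast
    qed
    moreover from this have first: "vec_first c k = vec_first d k"
      using inj_onD[OF inj _ c' d'] eq' by simp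
    have "c $ i = d $ i" if "i < k" for i
      using arg_cong[OF first, of "\<lambda>v. v $ i"] that by (simp add: vec_first_def)
    ultimately show "c = d"
      using vecs_over_carrier[OF c] vecs_over_carrier[OF d]
      by (intro eq_vecI) (auto simp: less_Suc_eq)
  qed
  then show ?thesis unfolding b'_def .
qed

context
  fixes E V :: "'k::field set"
  assumes E: "is_subfield E" and V_0: "0 \<in> V" and V_add: "\<And>x y. x \<in> V \<Longrightarrow> y \<in> V \<Longrightarrow> x + y \<in> V"
    and V_smult: "\<And>c x. c \<in> E \<Longrightarrow> x \<in> V \<Longrightarrow> c * x \<in> V"
begin

lemma lin_comb_in_subspace: "c \<in> vecs_over E k \<Longrightarrow> (\<And>i. i < k \<Longrightarrow> b i \<in> V) \<Longrightarrow> lin_comb c b \<in> V"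
proof -
  assume c: "c \<in> vecs_over E k" and b: "\<And>i. i < k \<Longrightarrow> b i \<in> V"
  have "(\<Sum>i\<in>A. c $ i * b i) \<in> V" if "A \<subseteq> {..<k}" for A
    using that by (induction A rule: infinite_finite_induct)
      (auto simp: V_0 intro!: V_add V_smult vecs_over_index[OF c] b)
  then show ?thesis using vecs_over_carrier[OF c] unfolding lin_comb_def by simp
qed

text \<open>Extend an independent family one vector at a time: as long as \<open>k < n\<close>, its span has
  \<open>|E|\<^sup>k < |V|\<close> elements, so some vector of \<open>V\<close> lies outside it.\<close>

lemma independent_family_exists:
  assumes "finite V" "card V = card E ^ n" "finite E" "k \<le> n"
  shows "\<exists>b. (\<forall>i<k. b i \<in> V) \<and> inj_on (\<lambda>c. lin_comb c b) (vecs_over E k)"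
  using assms(4)
proof (induction k)
  case 0
  show ?case by (rule exI[of _ undefined]) (auto simp: inj_on_def vecs_over_def intro: eq_vecI)
next
  case (Suc k)
  then obtain b where b: "\<forall>i<k. b i \<in> V" and inj: "inj_on (\<lambda>c. lin_comb c b) (vecs_over E k)" by auto
  define S where "S = (\<lambda>c. lin_comb c b) ` vecs_over E k"
  have S_V: "S \<subseteq> V" unfolding S_def using lin_comb_in_subspace b by blast
  have "card S < card V"
  proof -
    have "card {0, 1 :: 'k} \<le> card E"
      using card_mono[OF assms(3), of "{0, 1}"] subfield_0[OF E] subfield_1[OF E] by simp
    then have "1 < card E" by simp
    then show ?thesis using Suc.prems assms(2) card_image[OF inj]
      by (simp add: S_def card_vecs_over power_strict_increasing)
  qed
  with S_V have "S \<noteq> V" by auto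
  with S_V obtain r where r: "r \<in> V" "r \<notin> S" by blast
  have "inj_on (\<lambda>c. lin_comb c (b(k := r))) (vecs_over E (Suc k))"
    using inj_on_lin_comb_extend[OF E inj] r(2) unfolding S_def .
  moreover have "\<forall>i<Suc k. (b(k := r)) i \<in> V" using b r(1) by (auto simp: less_Suc_eq)
  ultimately show ?case by blast
qed

lemma basis_exists:
  assumes "finite V" "card V = card E ^ n" "finite E"
  shows "\<exists>b. (\<forall>i<n. b i \<in> V) \<and> bij_betw (\<lambda>c. lin_comb c b) (vecs_over E n) V"
proof -
  obtain b where b: "\<forall>i<n. b i \<in> V" and inj: "inj_on (\<lambda>c. lin_comb c b) (vecs_over E n)"
    using independent_family_exists[OF assms order.refl] by blast
  have "(\<lambda>c. lin_comb c b) ` vecs_over E n \<subseteq> V" using lin_comb_in_subspace b by blast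
  moreover have "card ((\<lambda>c. lin_comb c b) ` vecs_over E n) = card V"
    using card_image[OF inj] assms(2) by (simp add: card_vecs_over)
  ultimately have "(\<lambda>c. lin_comb c b) ` vecs_over E n = V"
    using assms(1) by (simp add: card_subset_eq)
  then show ?thesis using b inj unfolding bij_betw_def by blast
qed

end

section \<open>Moore matrices and the companion matrix of a \<open>q\<close>-polynomial\<close>

definition moore_mat :: "nat \<Rightarrow> nat \<Rightarrow> (nat \<Rightarrow> 'a::comm_ring_1) \<Rightarrow> 'a mat" where
  "moore_mat n q b = mat n n (\<lambda>(i, j). b i ^ (q ^ j))"

definition companion_mat :: "nat \<Rightarrow> (nat \<Rightarrow> 'a::comm_ring_1) \<Rightarrow> 'a mat" where
  "companion_mat n a = mat n n (\<lambda>(i, j). if Suc j < n then of_bool (i = Suc j) else - a i)"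

definition linearized_poly :: "nat \<Rightarrow> 'a::comm_ring_1 vec \<Rightarrow> 'a poly" where
  "linearized_poly q v = (\<Sum>j<dim_vec v. monom (v $ j) (q ^ j))"

lemma moore_mat_carrier [simp]: "moore_mat n q b \<in> carrier_mat n n"
  and companion_mat_carrier [simp]: "companion_mat n a \<in> carrier_mat n n"
  unfolding moore_mat_def companion_mat_def by simp_all

lemma det_companion_mat:
  assumes "0 < n"
  shows "det (companion_mat n a) = (- 1) ^ n * a 0"
proof -
  obtain m where n: "n = Suc m" using assms by (cases n) auto
  let ?S = "companion_mat n a"
  have "det ?S = (\<Sum>j<n. ?S $$ (0, j) * cofactor ?S 0 j)"
    by (rule laplace_expansion_row[OF companion_mat_carrier assms])
  also have "\<dots> = (\<Sum>j<n. if j = m then ?S $$ (0, m) * cofactor ?S 0 m else 0)"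
    by (rule sum.cong) (auto simp: companion_mat_def n)
  also have "\<dots> = - a 0 * cofactor ?S 0 m" by (simp add: companion_mat_def n)
  also have "mat_delete ?S 0 m = 1\<^sub>m m"
    by (rule eq_matI) (auto simp: mat_delete_def companion_mat_def n)
  then have "cofactor ?S 0 m = (- 1) ^ m" unfolding cofactor_def by simp
  finally show ?thesis unfolding n by simp
qed

lemma moore_mat_frobenius:
  assumes roots: "\<And>i. i < n \<Longrightarrow> b i ^ (q ^ n) = - (\<Sum>k<n. a k * b i ^ (q ^ k))"
  shows "map_mat (\<lambda>x. x ^ q) (moore_mat n q b) = moore_mat n q b * companion_mat n a"
proof (rule eq_matI)
  fix i j assume "i < dim_row (moore_mat n q b * companion_mat n a)"
    "j < dim_col (moore_mat n q b * companion_mat n a)"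
  hence i: "i < n" and j: "j < n" by (simp_all add: moore_mat_def companion_mat_def)
  have "(moore_mat n q b * companion_mat n a) $$ (i, j) =
      (\<Sum>k<n. b i ^ (q ^ k) * companion_mat n a $$ (k, j))"
    using i j by (simp add: moore_mat_def companion_mat_def scalar_prod_def lessThan_atLeast0)
  also have "\<dots> = b i ^ (q ^ Suc j)"
  proof (cases "Suc j < n")
    case True
    have "(\<Sum>k<n. b i ^ (q ^ k) * companion_mat n a $$ (k, j)) =
        (\<Sum>k<n. if k = Suc j then b i ^ (q ^ k) else 0)"
      by (rule sum.cong) (use True j in \<open>auto simp: companion_mat_def\<close>)
    then show ?thesis using True by simp
  next
    case False
    hence "Suc j = n" using j by simp
    then show ?thesis
      using roots[OF i] j by (simp add: companion_mat_def sum_negf mult.commute)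
  qed
  finally show "map_mat (\<lambda>x. x ^ q) (moore_mat n q b) $$ (i, j) =
      (moore_mat n q b * companion_mat n a) $$ (i, j)"
    using i j by (simp add: moore_mat_def power_mult[symmetric] mult.commute)
qed (simp_all add: moore_mat_def companion_mat_def)

lemma coeff_linearized_poly:
  "coeff (linearized_poly q v) i = (\<Sum>j<dim_vec v. if q ^ j = i then v $ j else 0)"
  unfolding linearized_poly_def by (simp add: coeff_sum coeff_monom)

lemma poly_linearized_poly:
  "poly (linearized_poly q v) x = (\<Sum>j<dim_vec v. v $ j * x ^ (q ^ j))"
  unfolding linearized_poly_def by (simp add: poly_sum poly_monom)

lemma q_polynomial_linearized_poly: "q_polynomial q (linearized_poly q v)"
  unfolding q_polynomial_def
proof (intro allI impI)
  fix i assume "coeff (linearized_poly q v) i \<noteq> 0"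
  then obtain j where "j \<in> {..<dim_vec v}" "(if q ^ j = i then v $ j else 0) \<noteq> 0"
    unfolding coeff_linearized_poly by (rule sum.not_neutral_contains_not_neutral)
  then show "\<exists>k. i = q ^ k" by (auto split: if_splits)
qed

lemma coeff_linearized_poly_power:
  "1 < q \<Longrightarrow> j < dim_vec v \<Longrightarrow> coeff (linearized_poly q v) (q ^ j) = v $ j"
  unfolding coeff_linearized_poly by (simp add: power_inject_exp if_distrib sum.delta cong: if_cong)

lemma degree_linearized_poly: "1 < q \<Longrightarrow> degree (linearized_poly q v) \<le> q ^ (dim_vec v - 1)"
  unfolding linearized_poly_def
  by (intro degree_sum_le order.trans[OF degree_monom_le] power_increasing) auto

context
  fixes q e :: nat
  assumes prime_char: "prime CHAR('k::field)" and q_char_power: "q = CHAR('k) ^ e"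
begin

lemma poly_q_polynomial_lin_comb:
  assumes "q_polynomial q (g :: 'k poly)" "c \<in> vecs_over (Fq_set q) n"
  shows "poly g (lin_comb c b) = lin_comb c (\<lambda>i. poly g (b i))"
  using assms vecs_over_carrier[OF assms(2)] vecs_over_index[OF assms(2)]
  unfolding lin_comb_def
  by (simp add: poly_q_polynomial_sum[OF prime_char q_char_power]
      poly_q_polynomial_smult[OF prime_char q_char_power])

text \<open>A nonzero vector in the kernel of the Moore matrix gives a \<open>q\<close>-polynomial of degree at
  most \<open>q\<^sup>n\<^sup>-\<^sup>1\<close> vanishing on all \<open>q\<^sup>n\<close> \<open>F\<^sub>q\<close>-combinations of the \<open>b\<^sub>i\<close>.\<close>

lemma det_moore_mat_nonzero:
  assumes e_pos: "e \<noteq> 0" and card_Fq: "card (Fq_set q :: 'k set) = q"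
    and indep: "inj_on (\<lambda>c. lin_comb c b) (vecs_over (Fq_set q) n)"
  shows "det (moore_mat n q (b :: nat \<Rightarrow> 'k)) \<noteq> 0"
proof
  note q_gt_1 = one_less_q[OF prime_char q_char_power e_pos]
  assume "det (moore_mat n q b) = 0"
  then obtain v where v: "v \<in> carrier_vec n" "v \<noteq> 0\<^sub>v n" "moore_mat n q b *\<^sub>v v = 0\<^sub>v n"
    using det_0_iff_vec_prod_zero_field[OF moore_mat_carrier] by blast
  let ?g = "linearized_poly q v"
  have "poly ?g (b i) = 0" if "i < n" for i
    using arg_cong[OF v(3), of "\<lambda>w. w $ i"] that v(1)
    by (simp add: poly_linearized_poly moore_mat_def scalar_prod_def lessThan_atLeast0 mult.commute)
  then have "poly ?g (lin_comb c b) = 0" if "c \<in> vecs_over (Fq_set q) n" for c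
    using poly_q_polynomial_lin_comb[OF q_polynomial_linearized_poly that] vecs_over_carrier[OF that]
    by (simp add: lin_comb_def)
  then have roots: "(\<lambda>c. lin_comb c b) ` vecs_over (Fq_set q) n \<subseteq> {x. poly ?g x = 0}" by auto
  have "\<exists>j<n. v $ j \<noteq> 0"
  proof (rule ccontr)
    assume "\<not> (\<exists>j<n. v $ j \<noteq> 0)"
    then have "v = 0\<^sub>v n" using v(1) by (intro eq_vecI) auto
    then show False using v(2) by simp
  qed
  then obtain j where j: "j < n" "v $ j \<noteq> 0" by blast
  then have g0: "?g \<noteq> 0" using coeff_linearized_poly_power[OF q_gt_1, of j v] v(1) by auto
  have "q ^ n = card ((\<lambda>c. lin_comb c b) ` vecs_over (Fq_set q) n)"
    using card_image[OF indep] card_Fq by (simp add: card_vecs_over)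
  also have "\<dots> \<le> card {x. poly ?g x = 0}" by (rule card_mono[OF poly_roots_finite[OF g0] roots])
  also have "\<dots> \<le> degree ?g" by (rule card_poly_roots_bound[OF g0])
  also have "\<dots> \<le> q ^ (n - 1)" using degree_linearized_poly[OF q_gt_1, of v] v(1) by simp
  also have "\<dots> < q ^ n" using j(1) q_gt_1 by (intro power_strict_increasing) auto
  finally show False by simp
qed

text \<open>Frobenius multiplies \<open>det M\<close> by \<open>det S = 1\<close>, so \<open>det M\<close> is fixed by it.\<close>

lemma det_moore_mat_in_Fq_set:
  assumes "\<And>i. i < n \<Longrightarrow> b i ^ (q ^ n) = - (\<Sum>k<n. a k * b i ^ (q ^ k))"
    and "det (companion_mat n a) = 1"
  shows "det (moore_mat n q (b :: nat \<Rightarrow> 'k)) \<in> Fq_set q"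
proof -
  interpret frobenius: comm_ring_hom "\<lambda>x::'k. x ^ q"
    by unfold_locales (use frobenius_add[OF prime_char q_char_power, of _ _ 1]
        q_pos[OF prime_char q_char_power] in \<open>auto simp: power_mult_distrib\<close>)
  have "det (moore_mat n q b) ^ q = det (map_mat (\<lambda>x. x ^ q) (moore_mat n q b))" by simp
  also have "\<dots> = det (moore_mat n q b * companion_mat n a)"
    using moore_mat_frobenius[OF assms(1)] by simp
  also have "\<dots> = det (moore_mat n q b) * det (companion_mat n a)"
    by (rule det_mult[OF moore_mat_carrier companion_mat_carrier])
  finally show ?thesis using assms(2) unfolding Fq_set_def by simp
qed

end

section \<open>The Galois representation on the roots of \<open>L\<close>\<close>

locale q_polynomial_galois =
  fixes p q n :: nat and L :: "'f::field poly" and \<phi> :: "'f \<Rightarrow> 'k::field"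
  assumes prime_p: "prime p" and q_power: "\<exists>k\<ge>1. q = p ^ k" and CHAR_f: "CHAR('f) = p"
    and card_Fq_f: "card (Fq_set q :: 'f set) = q" and q_polynomial_L: "q_polynomial q L"
    and n_pos: "n \<ge> 1" and degree_L: "degree L = q ^ n" and monic_L: "lead_coeff L = 1"
    and irreducible_L_div_X: "irreducible (L div [:0, 1:])" and coeff_L_1: "coeff L 1 = (- 1) ^ n"
    and splitting_field_L: "splitting_field \<phi> L"
begin

sublocale splitting_field_ext \<phi> L
  using splitting_field_L monic_L by unfold_locales auto

definition q_exp :: nat where
  "q_exp = (SOME k. k \<ge> 1 \<and> q = p ^ k)"

lemma CHAR_k: "CHAR('k) = p"
proof (rule CHAR_eqI)
  have "(of_nat p :: 'k) = \<phi> (of_nat p)" by (simp add: phi.hom_of_nat)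
  also have "(of_nat p :: 'f) = 0" using CHAR_f by (metis of_nat_CHAR)
  finally show "(of_nat p :: 'k) = 0" by simp
  fix x assume "(of_nat x :: 'k) = 0"
  hence "\<phi> (of_nat x) = 0" by (simp add: phi.hom_of_nat)
  thus "p dvd x" using CHAR_f by (simp add: of_nat_eq_0_iff_char_dvd)
qed

lemma prime_CHAR_k: "prime CHAR('k)" and q_eq: "q = CHAR('k) ^ q_exp" and q_exp_pos: "q_exp \<noteq> 0"
  using someI_ex[OF q_power] prime_p CHAR_k unfolding q_exp_def by auto

lemmas q_gt_1 = one_less_q[OF prime_CHAR_k q_eq q_exp_pos]
  and is_subfield_Fq = is_subfield_Fq_set[OF prime_CHAR_k q_eq]

lemma Fq_set_k_image: "Fq_set q = \<phi> ` Fq_set q" and card_Fq_k: "card (Fq_set q :: 'k set) = q"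
proof -
  have sub: "\<phi> ` Fq_set q \<subseteq> Fq_set q" unfolding Fq_set_def by (auto simp: phi.hom_power[symmetric])
  have card_img: "card (\<phi> ` Fq_set q) = q"
    using card_image[OF inj_on_subset[OF phi.inj_f subset_UNIV], of "Fq_set q"] card_Fq_f by simp
  then show "Fq_set q = \<phi> ` Fq_set q"
    using finite_card_Fq_set[OF q_gt_1] by (metis card_seteq sub)
  then show "card (Fq_set q :: 'k set) = q" using card_img by simp
qed

lemma galois_group_fixes_Fq: "\<sigma> \<in> galois_group \<phi> \<Longrightarrow> x \<in> Fq_set q \<Longrightarrow> \<sigma> x = x"
  using galois_group_fixes Fq_set_k_image by auto

abbreviation P :: "'k poly" where "P \<equiv> map_poly \<phi> L"

lemma q_polynomial_P: "q_polynomial q P"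
  using q_polynomial_L unfolding q_polynomial_def by (simp add: coeff_map_poly)

lemma zero_in_root_set: "0 \<in> root_set"
  unfolding root_set_def mem_Collect_eq
  by (rule poly_q_polynomial_0[OF prime_CHAR_k q_eq q_polynomial_P])

lemma root_set_add: "x \<in> root_set \<Longrightarrow> y \<in> root_set \<Longrightarrow> x + y \<in> root_set"
  and root_set_smult: "c \<in> Fq_set q \<Longrightarrow> x \<in> root_set \<Longrightarrow> c * x \<in> root_set"
  unfolding root_set_def
  by (simp_all add: poly_q_polynomial_add[OF prime_CHAR_k q_eq q_polynomial_P]
      poly_q_polynomial_smult[OF prime_CHAR_k q_eq q_polynomial_P])

text \<open>\<open>L\<close> is separable because \<open>L' = (-1)\<^sup>n\<close>.\<close>

lemma card_root_set: "card root_set = q ^ n"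
proof -
  obtain c xs where c: "P = smult c (\<Prod>a\<leftarrow>xs. [:- a, 1:])"
    using splitting_field_L unfolding splitting_field_def splits_def by blast
  have "c \<noteq> 0" using c L_nonzero by auto
  moreover have "pderiv P = [:\<phi> ((- 1) ^ n):]"
    using pderiv_q_polynomial[OF prime_CHAR_k q_eq q_polynomial_P q_exp_pos] coeff_L_1
    by (simp add: coeff_map_poly)
  moreover have "\<phi> ((- 1) ^ n) \<noteq> 0" by simp
  ultimately have "card {x. poly P x = 0} = degree P" by (rule card_roots_split_separable[OF c])
  then show ?thesis unfolding root_set_def using degree_L by simp
qed

definition root_basis :: "nat \<Rightarrow> 'k" where
  "root_basis = (SOME b. (\<forall>i<n. b i \<in> root_set) \<and>
     bij_betw (\<lambda>c. lin_comb c b) (vecs_over (Fq_set q) n) root_set)"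

definition root_coord :: "'k \<Rightarrow> 'k vec" where
  "root_coord = inv_into (vecs_over (Fq_set q) n) (\<lambda>c. lin_comb c root_basis)"

lemma root_basis: "\<And>i. i < n \<Longrightarrow> root_basis i \<in> root_set"
  and bij_lin_comb_root_basis:
    "bij_betw (\<lambda>c. lin_comb c root_basis) (vecs_over (Fq_set q) n) root_set"
proof -
  have "card root_set = card (Fq_set q :: 'k set) ^ n" using card_root_set card_Fq_k by simp
  then have "\<exists>b. (\<forall>i<n. b i \<in> root_set) \<and>
      bij_betw (\<lambda>c. lin_comb c b) (vecs_over (Fq_set q) n) root_set"
    using basis_exists[OF is_subfield_Fq zero_in_root_set root_set_add
        root_set_smult finite_root_set] finite_card_Fq_set[OF q_gt_1] by blast
  from someI_ex[OF this] show "\<And>i. i < n \<Longrightarrow> root_basis i \<in> root_set"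
    and "bij_betw (\<lambda>c. lin_comb c root_basis) (vecs_over (Fq_set q) n) root_set"
    unfolding root_basis_def by auto
qed

lemma root_coord_in_vecs_over: "x \<in> root_set \<Longrightarrow> root_coord x \<in> vecs_over (Fq_set q) n"
  and lin_comb_root_coord: "x \<in> root_set \<Longrightarrow> lin_comb (root_coord x) root_basis = x"
  and root_coord_lin_comb: "c \<in> vecs_over (Fq_set q) n \<Longrightarrow> root_coord (lin_comb c root_basis) = c"
  unfolding root_coord_def
  using bij_betw_apply[OF bij_betw_inv_into[OF bij_lin_comb_root_basis]]
    bij_betw_inv_into_right[OF bij_lin_comb_root_basis]
    inv_into_f_f[OF bij_betw_imp_inj_on[OF bij_lin_comb_root_basis]] by auto

lemma galois_lin_comb:
  assumes \<sigma>: "\<sigma> \<in> galois_group \<phi>" and c: "c \<in> vecs_over (Fq_set q) m"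
  shows "\<sigma> (lin_comb c b) = lin_comb c (\<lambda>i. \<sigma> (b i))"
proof -
  interpret s: field_hom \<sigma> by (rule galois_group_field_hom[OF \<sigma>])
  show ?thesis
    using galois_group_fixes_Fq[OF \<sigma>] vecs_over_carrier[OF c] vecs_over_index[OF c]
    unfolding lin_comb_def by (simp add: s.hom_sum s.hom_mult)
qed

definition galois_mat :: "('k \<Rightarrow> 'k) \<Rightarrow> 'k mat" where
  "galois_mat \<sigma> = mat n n (\<lambda>(i, j). root_coord (\<sigma> (root_basis j)) $ i)"

lemma galois_mat_carrier [simp]: "galois_mat \<sigma> \<in> carrier_mat n n"
  unfolding galois_mat_def by simp

lemma dim_galois_mat [simp]: "dim_row (galois_mat \<sigma>) = n" "dim_col (galois_mat \<sigma>) = n"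
  unfolding galois_mat_def by simp_all

lemma col_galois_mat:
  assumes "\<sigma> \<in> galois_group \<phi>" "j < n"
  shows "col (galois_mat \<sigma>) j = root_coord (\<sigma> (root_basis j))"
proof -
  have "root_coord (\<sigma> (root_basis j)) \<in> carrier_vec n"
    using root_coord_in_vecs_over[OF galois_group_root_set[OF assms(1) root_basis[OF assms(2)]]]
    by (rule vecs_over_carrier)
  then show ?thesis using assms(2) by (intro eq_vecI) (auto simp: galois_mat_def)
qed

lemma galois_mat_in_Fq:
  "\<sigma> \<in> galois_group \<phi> \<Longrightarrow> i < n \<Longrightarrow> j < n \<Longrightarrow> galois_mat \<sigma> $$ (i, j) \<in> Fq_set q"
  using root_coord_in_vecs_over[OF galois_group_root_set[OF _ root_basis]]
  by (auto simp: galois_mat_def vecs_over_def)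

lemma root_coord_galois:
  assumes \<sigma>: "\<sigma> \<in> galois_group \<phi>" and x: "x \<in> root_set"
  shows "root_coord (\<sigma> x) = galois_mat \<sigma> *\<^sub>v root_coord x"
proof -
  let ?c = "root_coord x"
  have c: "?c \<in> vecs_over (Fq_set q) n" by (rule root_coord_in_vecs_over[OF x])
  have "\<sigma> x = lin_comb ?c (\<lambda>j. \<sigma> (root_basis j))"
    using galois_lin_comb[OF \<sigma> c, of root_basis] lin_comb_root_coord[OF x] by simp
  also have "\<dots> = lin_comb ?c (\<lambda>j. lin_comb (col (galois_mat \<sigma>) j) root_basis)"
    using vecs_over_carrier[OF c] col_galois_mat[OF \<sigma>] galois_group_root_set[OF \<sigma> root_basis]
    by (auto intro!: lin_comb_cong simp: lin_comb_root_coord)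
  also have "\<dots> = lin_comb (galois_mat \<sigma> *\<^sub>v ?c) root_basis"
    by (rule lin_comb_mult_mat_vec[symmetric, OF galois_mat_carrier vecs_over_carrier[OF c]])
  finally show ?thesis
    using root_coord_lin_comb mult_mat_vec_vecs_over[OF is_subfield_Fq
        galois_mat_carrier galois_mat_in_Fq[OF \<sigma>] c] by simp
qed

lemma galois_mat_comp:
  assumes \<sigma>: "\<sigma> \<in> galois_group \<phi>" and \<tau>: "\<tau> \<in> galois_group \<phi>"
  shows "galois_mat (\<sigma> \<circ> \<tau>) = galois_mat \<sigma> * galois_mat \<tau>"
proof (rule eq_matI)
  fix i j
  assume "i < dim_row (galois_mat \<sigma> * galois_mat \<tau>)" "j < dim_col (galois_mat \<sigma> * galois_mat \<tau>)"
  hence i: "i < n" and j: "j < n" by simp_all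
  have "galois_mat (\<sigma> \<circ> \<tau>) $$ (i, j) = root_coord (\<sigma> (\<tau> (root_basis j))) $ i"
    using i j by (simp add: galois_mat_def)
  also have "\<dots> = (galois_mat \<sigma> *\<^sub>v col (galois_mat \<tau>) j) $ i"
    using root_coord_galois[OF \<sigma> galois_group_root_set[OF \<tau> root_basis[OF j]]] col_galois_mat[OF \<tau> j]
    by simp
  finally show "galois_mat (\<sigma> \<circ> \<tau>) $$ (i, j) = (galois_mat \<sigma> * galois_mat \<tau>) $$ (i, j)"
    using i j by simp
qed simp_all

lemma galois_mat_inj: "inj_on galois_mat (galois_group \<phi>)"
proof (rule inj_onI)
  fix \<sigma> \<tau> assume \<sigma>: "\<sigma> \<in> galois_group \<phi>" and \<tau>: "\<tau> \<in> galois_group \<phi>"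
    and eq: "galois_mat \<sigma> = galois_mat \<tau>"
  have "\<sigma> x = \<tau> x" if x: "x \<in> root_set" for x
    using root_coord_galois[OF \<sigma> x] root_coord_galois[OF \<tau> x] eq
      lin_comb_root_coord[OF galois_group_root_set[OF \<sigma> x]]
      lin_comb_root_coord[OF galois_group_root_set[OF \<tau> x]]
    by metis
  then show "\<sigma> = \<tau>" by (rule galois_group_eqI[OF \<sigma> \<tau>])
qed

lemma degree_P: "degree P = q ^ n"
  using degree_L by simp

lemma root_set_frobenius:
  assumes "x \<in> root_set"
  shows "x ^ (q ^ n) = - (\<Sum>k<n. \<phi> (coeff L (q ^ k)) * x ^ (q ^ k))"
proof -
  have "0 = (\<Sum>k\<le>n. coeff P (q ^ k) * x ^ (q ^ k))"
    using assms poly_q_polynomial[OF q_polynomial_P degree_P q_gt_1] unfolding root_set_def by simp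
  also have "\<dots> = (\<Sum>k<n. \<phi> (coeff L (q ^ k)) * x ^ (q ^ k)) + x ^ (q ^ n)"
    using monic_L degree_L by (simp add: lessThan_Suc_atMost[symmetric] coeff_map_poly)
  finally show ?thesis by (simp add: eq_neg_iff_add_eq_0 add.commute)
qed

lemma det_companion_mat_L: "det (companion_mat n (\<lambda>k. \<phi> (coeff L (q ^ k)))) = 1"
  using n_pos coeff_L_1 by (simp add: det_companion_mat phi.hom_power phi.hom_uminus
      flip: power_mult_distrib)

text \<open>Applying \<open>\<sigma>\<close> to the Moore matrix \<open>M\<close> of the basis multiplies it by the transposed
  matrix of \<open>\<sigma>\<close>, and \<open>det M\<close> is a nonzero element of \<open>F\<^sub>q\<close>, fixed by \<open>\<sigma>\<close>.\<close>

lemma det_galois_mat: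
  assumes \<sigma>: "\<sigma> \<in> galois_group \<phi>"
  shows "det (galois_mat \<sigma>) = 1"
proof -
  interpret s: field_hom \<sigma> by (rule galois_group_field_hom[OF \<sigma>])
  let ?M = "moore_mat n q root_basis"
  have M_\<sigma>: "map_mat \<sigma> ?M = transpose_mat (galois_mat \<sigma>) * ?M"
  proof (rule eq_matI)
    fix i j assume "i < dim_row (transpose_mat (galois_mat \<sigma>) * ?M)"
      "j < dim_col (transpose_mat (galois_mat \<sigma>) * ?M)"
    hence i: "i < n" and j: "j < n" by (simp_all add: moore_mat_def)
    let ?d = "root_coord (\<sigma> (root_basis i))"
    have d: "?d \<in> vecs_over (Fq_set q) n"
      by (rule root_coord_in_vecs_over[OF galois_group_root_set[OF \<sigma> root_basis[OF i]]])
    have "map_mat \<sigma> ?M $$ (i, j) = (lin_comb ?d root_basis) ^ (q ^ j)"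
      using i j lin_comb_root_coord[OF galois_group_root_set[OF \<sigma> root_basis[OF i]]]
      by (simp add: moore_mat_def s.hom_power)
    also have "\<dots> = (\<Sum>k<n. ?d $ k * root_basis k ^ (q ^ j))"
      using vecs_over_carrier[OF d] vecs_over_index[OF d]
      by (simp add: lin_comb_def frobenius_sum[OF prime_CHAR_k q_eq] power_mult_distrib Fq_set_power)
    also have "\<dots> = (transpose_mat (galois_mat \<sigma>) * ?M) $$ (i, j)"
      using i j by (simp add: galois_mat_def moore_mat_def scalar_prod_def lessThan_atLeast0)
    finally show "map_mat \<sigma> ?M $$ (i, j) = (transpose_mat (galois_mat \<sigma>) * ?M) $$ (i, j)" .
  qed (simp_all add: moore_mat_def)
  have "\<sigma> (det ?M) = det (transpose_mat (galois_mat \<sigma>) * ?M)" unfolding M_\<sigma>[symmetric] by simp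
  also have "\<dots> = det (galois_mat \<sigma>) * det ?M"
    by (simp add: det_mult[of "transpose_mat (galois_mat \<sigma>)" n ?M] det_transpose[of _ n])
  moreover have "\<sigma> (det ?M) = det ?M"
    using det_moore_mat_in_Fq_set[OF prime_CHAR_k q_eq root_set_frobenius[OF root_basis]
        det_companion_mat_L] galois_group_fixes_Fq[OF \<sigma>] by simp
  moreover have "det ?M \<noteq> 0"
    using det_moore_mat_nonzero[OF prime_CHAR_k q_eq q_exp_pos card_Fq_k
        bij_betw_imp_inj_on[OF bij_lin_comb_root_basis]] .
  ultimately show ?thesis by simp
qed

lemma root_of_L_div_X:
  assumes "x \<in> root_set" "x \<noteq> 0"
  shows "poly (map_poly \<phi> (L div [:0, 1:])) x = 0"
proof -
  have "coeff L 0 = 0" using q_polynomial_L q_gt_1 unfolding q_polynomial_def by force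
  then have "[:0, 1:] dvd L" using poly_eq_0_iff_dvd[of L 0] by (simp add: poly_0_coeff_0)
  then have L: "L = [:0, 1:] * (L div [:0, 1:])" by (rule dvd_mult_div_cancel[symmetric])
  have "P = map_poly \<phi> [:0, 1:] * map_poly \<phi> (L div [:0, 1:])"
    using arg_cong[OF L, of "map_poly \<phi>"] by (simp only: map_phi.hom_mult)
  then have "poly P x = x * poly (map_poly \<phi> (L div [:0, 1:])) x" by simp
  then show ?thesis using assms unfolding root_set_def by simp
qed

lemma galois_mat_transitive:
  assumes u: "u \<in> vecs_over (Fq_set q) n" "u \<noteq> 0\<^sub>v n"
    and v: "v \<in> vecs_over (Fq_set q) n" "v \<noteq> 0\<^sub>v n"
  shows "\<exists>\<sigma>\<in>galois_group \<phi>. galois_mat \<sigma> *\<^sub>v u = v"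
proof -
  have zero: "(0\<^sub>v n :: 'k vec) \<in> vecs_over (Fq_set q) n" "lin_comb (0\<^sub>v n) root_basis = 0"
    using subfield_0[OF is_subfield_Fq] by (auto simp: vecs_over_def lin_comb_def)
  have roots: "lin_comb w root_basis \<in> root_set" "lin_comb w root_basis \<noteq> 0"
    if "w \<in> vecs_over (Fq_set q) n" "w \<noteq> 0\<^sub>v n" for w
    using bij_betw_apply[OF bij_lin_comb_root_basis that(1)] that zero
      inj_onD[OF bij_betw_imp_inj_on[OF bij_lin_comb_root_basis], of w "0\<^sub>v n"] by auto
  obtain \<sigma> where \<sigma>: "\<sigma> \<in> galois_group \<phi>" "\<sigma> (lin_comb u root_basis) = lin_comb v root_basis"
    using galois_group_transitive_on_roots[OF irreducible_L_div_X] roots[OF u] roots[OF v]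
      root_of_L_div_X by blast
  have "galois_mat \<sigma> *\<^sub>v u = v"
    using root_coord_galois[OF \<sigma>(1) roots(1)[OF u]] \<sigma>(2) root_coord_lin_comb u(1) v(1) by simp
  with \<sigma>(1) show ?thesis by blast
qed

text \<open>The entries of \<open>galois_mat \<sigma>\<close> lie in \<open>F\<^sub>q = \<phi> ` F\<^sub>q\<close>, so they can be pulled back to \<open>F\<close>.\<close>

definition galois_rep :: "('k \<Rightarrow> 'k) \<Rightarrow> 'f mat" where
  "galois_rep \<sigma> = map_mat (inv_into UNIV \<phi>) (galois_mat \<sigma>)"

lemma galois_rep_carrier: "galois_rep \<sigma> \<in> carrier_mat n n"
  unfolding galois_rep_def by simp

lemma inv_phi_Fq: "x \<in> Fq_set q \<Longrightarrow> inv_into UNIV \<phi> x \<in> Fq_set q \<and> \<phi> (inv_into UNIV \<phi> x) = x"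
  using Fq_set_k_image phi.inj_f by (auto simp: inv_f_f)

lemma map_mat_galois_rep: "\<sigma> \<in> galois_group \<phi> \<Longrightarrow> map_mat \<phi> (galois_rep \<sigma>) = galois_mat \<sigma>"
  using inv_phi_Fq galois_mat_in_Fq unfolding galois_rep_def by (intro eq_matI) auto

lemma galois_rep_SL:
  assumes \<sigma>: "\<sigma> \<in> galois_group \<phi>"
  shows "galois_rep \<sigma> \<in> SL_mats n q"
proof -
  have "\<phi> (det (galois_rep \<sigma>)) = det (galois_mat \<sigma>)"
    using map_mat_galois_rep[OF \<sigma>] by (metis phi.hom_det)
  then have "det (galois_rep \<sigma>) = 1" using det_galois_mat[OF \<sigma>] by simp
  moreover have "galois_rep \<sigma> $$ (i, j) \<in> Fq_set q" if "i < n" "j < n" for i j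
    using inv_phi_Fq[OF galois_mat_in_Fq[OF \<sigma> that]] that unfolding galois_rep_def by simp
  ultimately show ?thesis unfolding SL_mats_def using galois_rep_carrier by blast
qed

lemma galois_rep_comp:
  "\<sigma> \<in> galois_group \<phi> \<Longrightarrow> \<tau> \<in> galois_group \<phi> \<Longrightarrow> galois_rep (\<sigma> \<circ> \<tau>) = galois_rep \<sigma> * galois_rep \<tau>"
  using map_mat_galois_rep galois_mat_comp galois_group_comp
  by (intro phi.mat_hom_inj) (simp add: phi.mat_hom_mult[OF galois_rep_carrier galois_rep_carrier])

lemma galois_rep_inj: "inj_on galois_rep (galois_group \<phi>)"
proof (rule inj_onI)
  fix \<sigma> \<tau> assume \<sigma>: "\<sigma> \<in> galois_group \<phi>" and \<tau>: "\<tau> \<in> galois_group \<phi>"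
    and "galois_rep \<sigma> = galois_rep \<tau>"
  then have "galois_mat \<sigma> = galois_mat \<tau>" using map_mat_galois_rep by metis
  then show "\<sigma> = \<tau>" using inj_onD[OF galois_mat_inj _ \<sigma> \<tau>] by blast
qed

lemma galois_rep_transitive:
  assumes "u \<in> nonzero_Fq_vecs n q" "v \<in> nonzero_Fq_vecs n q"
  shows "\<exists>\<sigma>\<in>galois_group \<phi>. galois_rep \<sigma> *\<^sub>v u = v"
proof -
  have lift: "map_vec \<phi> w \<in> vecs_over (Fq_set q) n" "map_vec \<phi> w \<noteq> 0\<^sub>v n" "w \<in> carrier_vec n"
    if "w \<in> nonzero_Fq_vecs n q" for w
    using that Fq_set_k_image phi.vec_hom_zero_iff unfolding nonzero_Fq_vecs_def vecs_over_def by auto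
  obtain \<sigma> where \<sigma>: "\<sigma> \<in> galois_group \<phi>" "galois_mat \<sigma> *\<^sub>v map_vec \<phi> u = map_vec \<phi> v"
    using galois_mat_transitive lift assms by blast
  then have "map_vec \<phi> (galois_rep \<sigma> *\<^sub>v u) = map_vec \<phi> v"
    using phi.mult_mat_vec_hom[OF galois_rep_carrier lift(3)[OF assms(1)]] map_mat_galois_rep by simp
  then show ?thesis using \<sigma>(1) phi.vec_hom_inj by blast
qed

end

theorem theorem3p1:
  fixes p q n :: nat and L :: "'f::field poly" and \<phi> :: "'f \<Rightarrow> 'k::field"
  assumes "prime p"
    and "\<exists>k\<ge>1. q = p ^ k"
    and "CHAR('f) = p"
    and "card (Fq_set q :: 'f set) = q"
    and "q_polynomial q L"
    and "n \<ge> 1"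
    and "degree L = q ^ n"
    and "lead_coeff L = 1"
    and "irreducible (L div [:0, 1:])"
    and "coeff L 1 = (- 1) ^ n"
    and "splitting_field \<phi> L"
  shows "\<exists>\<rho> :: ('k \<Rightarrow> 'k) \<Rightarrow> 'f mat.
           (\<forall>\<sigma>\<in>galois_group \<phi>. \<rho> \<sigma> \<in> SL_mats n q) \<and>
           (\<forall>\<sigma>\<in>galois_group \<phi>. \<forall>\<tau>\<in>galois_group \<phi>. \<rho> (\<sigma> \<circ> \<tau>) = \<rho> \<sigma> * \<rho> \<tau>) \<and>
           inj_on \<rho> (galois_group \<phi>) \<and>
           (\<forall>u\<in>nonzero_Fq_vecs n q. \<forall>v\<in>nonzero_Fq_vecs n q.
              \<exists>\<sigma>\<in>galois_group \<phi>. \<rho> \<sigma> *\<^sub>v u = v)"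
proof -
  interpret q_polynomial_galois p q n L \<phi> by unfold_locales (rule assms)+
  show ?thesis
    by (intro exI[of _ galois_rep] conjI ballI galois_rep_SL galois_rep_comp galois_rep_inj
        galois_rep_transitive)
qed

end
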